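(* Assume $\sigma_1(x)=\sigma_1'(0)(x-a_1)$ with $\sigma_1'(0)\ne0$ and $a_1\ne0$ real, and that $\sigma_2(x)=\tfrac12\sigma_2''(0)(x-a_2)(x-b_2)$ (where $\tfrac12\sigma_2''(0)=(q-1)\tau'(0)$) has real zeros with $a_1<0<a_2\le b_2$; assume $\Lambda_q:=\tau'(0)/\sigma_1'(0)<0$. Put $a=b_2$ and $$\rho(x)=|x|^{\alpha}\sqrt{x^{\log_qx-1}}\,\frac{(qa_2/x,\,qa/x;q)_\infty}{(a_1/x;q)_\infty},\qquad q^{\alpha}=\frac{q^{-2}\tfrac12\sigma_2''(0)}{\sigma_1'(0)}.$$ Then there exist polynomials $P_n$, $n\in\mathbb{N}_0$, with $P_n$ of degree $n$ a solution of the q-EHT with $\lambda=\lambda_n$, and nonzero constants $d_n^2$, such that for all $m,n\in\mathbb{N}_0$ $$\int_a^{\infty}P_n(x)P_m(x)\rho(x)\,d_{q^{-1}}x=d_n^2\delta_{mn},$$ i.e. the $P_n$ are orthogonal with respect to $\rho$ supported on $\{q^{-k}a\}_{k\in\mathbb{N}_0}$.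
   Context: Throughout $0<q<1$. For a function $y$ and $\zeta\in\{q,q^{-1}\}$, $D_\zeta y(x)=\frac{y(x)-y(\zeta x)}{(1-\zeta)x}$ for $x\ne0$ and $D_\zeta y(0)=y'(0)$; $[n]_q=\frac{1-q^n}{1-q}$. Let $\sigma_1$ be a real polynomial of degree at most two, $\tau(x)=\tau'(0)x+\tau(0)$ a real polynomial with $\tau'(0)\ne0$, and $\sigma_2(x):=q[\sigma_1(x)+(1-q^{-1})x\tau(x)]$. The q-EHT with parameter $n$ is $\sigma_1(x)D_{q^{-1}}D_qy(x)+\tau(x)D_qy(x)+\lambda_ny(x)=0$, $\lambda_n=-[n]_q\big(\tau'(0)+\tfrac12[n-1]_{q^{-1}}\sigma_1''(0)\big)$. $(\beta;q)_\infty=\prod_{k\ge0}(1-\beta q^k)$, $(\beta_1,\dots,\beta_r;q)_\infty=\prod_i(\beta_i;q)_\infty$. For $q^\alpha=c$ ($c\ne0$), $\alpha$ is any complex number with $e^{\alpha\ln q}=c$ and $|x|^\alpha:=e^{\alpha\ln|x|}$; for $x>0$, $\sqrt{x^{\log_qx-1}}:=\exp\big(\tfrac12(\log_qx-1)\ln x\big)$. For $a>0$, $\int_a^\infty f(x)\,d_{q^{-1}}x=(q^{-1}-1)a\sum_{j\ge0}q^{-j}f(q^{-j}a)$. *)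

theory Defs
  imports "HOL-Analysis.Analysis" "HOL-Computational_Algebra.Polynomial"
begin

definition qnum :: "real \<Rightarrow> int \<Rightarrow> real" where
  "qnum q n = (1 - q powi n) / (1 - q)"

definition qD :: "real \<Rightarrow> (real \<Rightarrow> real) \<Rightarrow> real \<Rightarrow> real" where
  "qD \<zeta> y x = (if x = 0 then deriv y 0 else (y x - y (\<zeta> * x)) / ((1 - \<zeta>) * x))"

definition sigma2 :: "real \<Rightarrow> real poly \<Rightarrow> real poly \<Rightarrow> real poly" where
  "sigma2 q \<sigma>1 \<tau> = smult q (\<sigma>1 + smult (1 - 1/q) ([:0, 1:] * \<tau>))"

definition qEHT_lambda :: "real \<Rightarrow> real poly \<Rightarrow> real poly \<Rightarrow> nat \<Rightarrow> real" where
  "qEHT_lambda q \<sigma>1 \<tau> n =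
     - qnum q (int n) * (poly (pderiv \<tau>) 0
        + 1/2 * qnum (1/q) (int n - 1) * poly (pderiv (pderiv \<sigma>1)) 0)"

definition qEHT_solution :: "real \<Rightarrow> real poly \<Rightarrow> real poly \<Rightarrow> real \<Rightarrow> (real \<Rightarrow> real) \<Rightarrow> bool" where
  "qEHT_solution q \<sigma>1 \<tau> lam y \<longleftrightarrow>
     (\<forall>x. poly \<sigma>1 x * qD (1/q) (qD q y) x + poly \<tau> x * qD q y x + lam * y x = 0)"

definition qpoch_inf :: "real \<Rightarrow> real \<Rightarrow> real" where
  "qpoch_inf \<beta> q = (\<Prod>k. 1 - \<beta> * q ^ k)"

definition rho :: "real \<Rightarrow> complex \<Rightarrow> real \<Rightarrow> real \<Rightarrow> real \<Rightarrow> real \<Rightarrow> complex" where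
  "rho q \<alpha> a1 a2 a x =
     exp (\<alpha> * of_real (ln \<bar>x\<bar>))
     * of_real (exp (1/2 * (log q x - 1) * ln x)
        * qpoch_inf (q * a2 / x) q * qpoch_inf (q * a / x) q / qpoch_inf (a1 / x) q)"

text \<open>The Jackson integral int_a^infinity f(x) d_{q^{-1}}x converges (as a series) to I.\<close>
definition has_qint_inf :: "real \<Rightarrow> (real \<Rightarrow> complex) \<Rightarrow> real \<Rightarrow> complex \<Rightarrow> bool" where
  "has_qint_inf q f a I \<longleftrightarrow>
     (\<lambda>j. of_real ((1/q - 1) * a * (1/q) ^ j) * f ((1/q) ^ j * a)) sums I"

end

theory Submission
  imports Defs "HOL-Real_Asymp.Real_Asymp"
begin

text \<open>For linear \<open>\<sigma>\<^sub>1\<close> and \<open>\<tau>\<close> the q-EHT operator maps polynomials of degree \<open>\<le> n\<close> to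
  themselves and is triangular in the monomial basis with distinct diagonal entries
  \<open>\<tau>'(0) ([i]\<^sub>q - [n]\<^sub>q)\<close>, so it has a polynomial eigenfunction \<open>P\<^sub>n\<close> of exact degree \<open>n\<close>.
  On the lattice \<open>x\<^sub>j = a q\<^sup>-\<^sup>j\<close> the Jackson integral against \<open>\<rho>\<close> is a series with weights \<open>w\<^sub>j\<close>
  satisfying the q-Pearson relation \<open>w\<^sub>j\<^sub>+\<^sub>1 \<sigma>\<^sub>2(x\<^sub>j\<^sub>+\<^sub>1) = w\<^sub>j \<sigma>\<^sub>1(x\<^sub>j)\<close>, which makes the operator a
  symmetric Jacobi-type difference operator; \<open>\<sigma>\<^sub>2(a) = 0\<close> kills the boundary term at \<open>x\<^sub>0\<close>,
  and the weights decay superexponentially, so the boundary term at infinity vanishes.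
  Green's identity then gives orthogonality for distinct eigenvalues, and positivity of the
  weights gives nonzero norms.\<close>

lemma convergent_prod_qpoch:
  fixes q \<beta> :: real
  assumes "0 < q" "q < 1"
  shows "convergent_prod (\<lambda>k. 1 - \<beta> * q ^ k)"
proof -
  have "summable (\<lambda>k. norm ((1 - \<beta> * q ^ k) - 1))"
    using summable_mult[OF summable_geometric[of q], of "\<bar>\<beta>\<bar>"] assms
    by (simp add: abs_mult power_abs)
  then show ?thesis
    by (intro abs_convergent_prod_imp_convergent_prod summable_imp_abs_convergent_prod)
qed

lemma qpoch_inf_pos:
  fixes q \<beta> :: real
  assumes "0 < q" "q < 1" "\<beta> < 1"
  shows "qpoch_inf \<beta> q > 0"
proof -
  have "\<beta> * q ^ k < 1" for k
  proof (cases "\<beta> \<le> 0")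
    case True
    then show ?thesis using assms mult_nonpos_nonneg[of \<beta> "q ^ k"] by simp
  next
    case False
    then have "\<beta> * q ^ k \<le> \<beta>" using assms by (simp add: mult_left_le power_le_one)
    then show ?thesis using assms by linarith
  qed
  then show ?thesis unfolding qpoch_inf_def
    by (intro has_prod_pos[OF convergent_prod_has_prod[OF convergent_prod_qpoch[OF assms(1,2)]]]) simp
qed

lemma qpoch_inf_split_head:
  fixes q \<beta> :: real
  assumes "0 < q" "q < 1" "\<beta> \<noteq> 1"
  shows "qpoch_inf \<beta> q = (1 - \<beta>) * qpoch_inf (\<beta> * q) q"
proof -
  have "qpoch_inf (\<beta> * q) q = (\<Prod>k. 1 - \<beta> * q ^ Suc k)"
    unfolding qpoch_inf_def by (simp add: ac_simps)
  also have "\<dots> = qpoch_inf \<beta> q / (1 - \<beta>)"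
    unfolding qpoch_inf_def using assms
    by (subst prodinf_split_head[OF convergent_prod_qpoch[OF assms(1,2)]]) simp_all
  finally show ?thesis using assms by simp
qed

lemma qnum_nat: "qnum z (int k) = (1 - z ^ k) / (1 - z)"
  by (simp add: qnum_def power_int_of_nat)

lemma qnum_nat_eq_iff:
  fixes q :: real
  assumes "0 < q" "q < 1"
  shows "qnum q (int i) = qnum q (int n) \<longleftrightarrow> i = n"
proof -
  have "q ^ i = q ^ n \<longleftrightarrow> i = n"
    using assms by (metis less_irrefl nat_neq_iff power_strict_decreasing_iff)
  then show ?thesis using assms by (simp add: qnum_nat)
qed

lift_definition qderiv_poly :: "real \<Rightarrow> real poly \<Rightarrow> real poly" is
  "\<lambda>z p k. coeff p (Suc k) * qnum z (int (Suc k))"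
proof -
  fix z :: real and p :: "real poly"
  have "\<forall>\<^sub>\<infinity> k. coeff p (Suc k) = 0"
    unfolding MOST_nat by (auto intro!: exI[of _ "degree p"] coeff_eq_0)
  then show "\<forall>\<^sub>\<infinity> k. coeff p (Suc k) * qnum z (int (Suc k)) = 0"
    by (rule MOST_mono) simp
qed

lemma coeff_qderiv_poly: "coeff (qderiv_poly z p) k = coeff p (Suc k) * qnum z (int (Suc k))"
  by (simp add: qderiv_poly.rep_eq)

lemma qderiv_poly_0 [simp]: "qderiv_poly z 0 = 0"
  by (simp add: poly_eq_iff coeff_qderiv_poly)

lemma qderiv_poly_add: "qderiv_poly z (p + r) = qderiv_poly z p + qderiv_poly z r"
  by (simp add: poly_eq_iff coeff_qderiv_poly algebra_simps)

lemma qderiv_poly_diff: "qderiv_poly z (p - r) = qderiv_poly z p - qderiv_poly z r"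
  by (simp add: poly_eq_iff coeff_qderiv_poly algebra_simps)

lemma degree_qderiv_poly_le: "degree (qderiv_poly z p) \<le> degree p"
  by (rule degree_le) (simp add: coeff_qderiv_poly coeff_eq_0)

lemma poly_eq_sum_atMost:
  fixes r :: "'a::comm_semiring_1 poly"
  assumes "degree r \<le> N"
  shows "poly r x = (\<Sum>i\<le>N. coeff r i * x ^ i)"
  unfolding poly_altdef using assms by (intro sum.mono_neutral_left) (auto simp: coeff_eq_0)

lemma qD_poly:
  assumes "z \<noteq> 1"
  shows "qD z (poly p) = poly (qderiv_poly z p)"
proof
  fix x :: real
  show "qD z (poly p) x = poly (qderiv_poly z p) x"
  proof (cases "x = 0")
    case True
    have "deriv (poly p) 0 = poly (pderiv p) 0"
      by (rule DERIV_imp_deriv) (rule poly_DERIV)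
    then show ?thesis using True assms
      by (simp add: qD_def poly_0_coeff_0 coeff_pderiv coeff_qderiv_poly qnum_def)
  next
    case False
    let ?N = "Suc (degree p)"
    have "x * poly (qderiv_poly z p) x
        = (\<Sum>i\<le>degree p. coeff p (Suc i) * qnum z (int (Suc i)) * x ^ Suc i)"
      using poly_eq_sum_atMost[OF degree_qderiv_poly_le[of z p], of x]
      by (simp add: coeff_qderiv_poly sum_distrib_left algebra_simps)
    also have "\<dots> = (\<Sum>i\<le>?N. coeff p i * qnum z (int i) * x ^ i)"
      by (subst sum.atMost_Suc_shift) (simp add: qnum_def)
    finally have "(1 - z) * (x * poly (qderiv_poly z p) x)
        = (\<Sum>i\<le>?N. (1 - z) * (coeff p i * qnum z (int i) * x ^ i))"
      by (simp only: sum_distrib_left)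
    also have "\<dots> = (\<Sum>i\<le>?N. coeff p i * (1 - z ^ i) * x ^ i)"
      using assms by (intro sum.cong) (simp_all add: qnum_nat)
    also have "\<dots> = poly p x - poly p (z * x)"
      using poly_eq_sum_atMost[of p ?N]
      by (simp add: sum_subtractf[symmetric] power_mult_distrib algebra_simps del: sum.atMost_Suc)
    finally show ?thesis using False assms by (simp add: qD_def field_simps)
  qed
qed

definition qEHT_op :: "real \<Rightarrow> real poly \<Rightarrow> real poly \<Rightarrow> real \<Rightarrow> real poly \<Rightarrow> real poly" where
  "qEHT_op q \<sigma>1 \<tau> lam p = \<sigma>1 * qderiv_poly (1/q) (qderiv_poly q p) + \<tau> * qderiv_poly q p + smult lam p"

lemma qEHT_solution_poly_iff:
  fixes q :: real
  assumes "0 < q" "q < 1"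
  shows "qEHT_solution q \<sigma>1 \<tau> lam (poly p) \<longleftrightarrow> qEHT_op q \<sigma>1 \<tau> lam p = 0"
proof -
  have "qD q (poly r) = poly (qderiv_poly q r)" "qD (1/q) (poly r) = poly (qderiv_poly (1/q) r)" for r
    using assms by (simp_all add: qD_poly)
  then show ?thesis
    by (simp add: qEHT_solution_def qEHT_op_def poly_all_0_iff_0[symmetric])
qed

lemma qEHT_op_add: "qEHT_op q \<sigma>1 \<tau> lam (p + r) = qEHT_op q \<sigma>1 \<tau> lam p + qEHT_op q \<sigma>1 \<tau> lam r"
  by (simp add: qEHT_op_def qderiv_poly_add smult_add_right algebra_simps)

lemma qEHT_op_diff: "qEHT_op q \<sigma>1 \<tau> lam (p - r) = qEHT_op q \<sigma>1 \<tau> lam p - qEHT_op q \<sigma>1 \<tau> lam r"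
  by (simp add: qEHT_op_def qderiv_poly_diff smult_diff_right algebra_simps)

lemma coeff_linear_mult:
  "coeff ([:a, b:] * r) i = a * coeff r i + (if i = 0 then 0 else b * coeff r (i - 1))"
  by (cases i) (simp_all add: coeff_pCons)

lemma coeff_qEHT_op_linear:
  assumes "degree p \<le> i"
  shows "coeff (qEHT_op q [:c0, c1:] [:t0, t1:] lam p) i = (t1 * qnum q (int i) + lam) * coeff p i"
  using assms by (cases i) (simp_all add: qEHT_op_def coeff_linear_mult coeff_qderiv_poly
      coeff_eq_0 qnum_def algebra_simps)

lemma qEHT_op_linear_solvable:
  assumes "\<And>i. i < n \<Longrightarrow> t1 * qnum q (int i) + lam \<noteq> 0" "k \<le> n" "\<forall>j\<ge>k. coeff r j = 0"
  shows "\<exists>s. (\<forall>j\<ge>k. coeff s j = 0) \<and> qEHT_op q [:c0, c1:] [:t0, t1:] lam s = r"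
  using assms(2,3)
proof (induction k arbitrary: r)
  case 0
  then have "r = 0" by (simp add: poly_eq_iff)
  then show ?case by (intro exI[of _ 0]) (simp add: qEHT_op_def)
next
  case (Suc k)
  let ?T = "qEHT_op q [:c0, c1:] [:t0, t1:] lam"
  define \<mu> where "\<mu> = t1 * qnum q (int k) + lam"
  have "\<mu> \<noteq> 0" using assms(1) Suc.prems unfolding \<mu>_def by simp
  define s0 where "s0 = monom (coeff r k / \<mu>) k"
  have "degree s0 \<le> k" by (simp add: s0_def degree_monom_le)
  then have "coeff (?T s0) i = (if i = k then coeff r k else 0)" if "k \<le> i" for i
    using coeff_qEHT_op_linear[of s0 i q c0 c1 t0 t1 lam] that \<open>\<mu> \<noteq> 0\<close>
    by (auto simp: s0_def \<mu>_def)
  then have "\<forall>j\<ge>k. coeff (r - ?T s0) j = 0"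
    using Suc.prems by (auto simp: le_Suc_eq)
  moreover have "k \<le> n" using Suc.prems(1) by simp
  ultimately obtain s1 where "\<forall>j\<ge>k. coeff s1 j = 0" "?T s1 = r - ?T s0"
    using Suc.IH by blast
  then show ?case
    by (intro exI[of _ "s0 + s1"]) (simp add: s0_def qEHT_op_add)
qed

lemma qEHT_op_linear_eigenpoly:
  assumes "0 < q" "q < 1" "t1 \<noteq> 0"
  shows "\<exists>P. degree P = n \<and> P \<noteq> 0 \<and> qEHT_op q [:c0, c1:] [:t0, t1:] (- t1 * qnum q (int n)) P = 0"
proof -
  let ?lam = "- t1 * qnum q (int n)"
  let ?T = "qEHT_op q [:c0, c1:] [:t0, t1:] ?lam"
  have "t1 * qnum q (int i) + ?lam \<noteq> 0" if "i < n" for i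
    using that assms qnum_nat_eq_iff[OF assms(1,2), of i n] by auto
  moreover have "\<forall>j\<ge>n. coeff (?T (monom 1 n)) j = 0"
  proof (intro allI impI)
    fix j assume "n \<le> j"
    then show "coeff (?T (monom 1 n)) j = 0"
      using coeff_qEHT_op_linear[of "monom 1 n" j q c0 c1 t0 t1 ?lam] by (simp add: degree_monom_eq)
  qed
  ultimately obtain s where s: "\<forall>j\<ge>n. coeff s j = 0" "?T s = ?T (monom 1 n)"
    using qEHT_op_linear_solvable[of n] by blast
  define P where "P = monom 1 n - s"
  have "coeff P n = 1" "\<forall>j>n. coeff P j = 0" using s by (simp_all add: P_def coeff_monom)
  then have "degree P = n" by (intro order_antisym degree_le le_degree) auto
  moreover have "?T P = 0" using s by (simp add: P_def qEHT_op_diff)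
  ultimately show ?thesis using \<open>coeff P n = 1\<close> by (intro exI[of _ P]) auto
qed

definition rho_factor :: "real \<Rightarrow> real \<Rightarrow> real \<Rightarrow> real \<Rightarrow> real \<Rightarrow> real" where
  "rho_factor q a1 a2 a y = exp (1/2 * (log q y - 1) * ln y)
     * qpoch_inf (q * a2 / y) q * qpoch_inf (q * a / y) q / qpoch_inf (a1 / y) q"

lemma rho_eq_rho_factor:
  "rho q \<alpha> a1 a2 a x = exp (\<alpha> * of_real (ln \<bar>x\<bar>)) * of_real (rho_factor q a1 a2 a x)"
  by (simp add: rho_def rho_factor_def)

lemma exp_half_log_shift:
  fixes q y :: real
  assumes "0 < q" "q < 1" "0 < y"
  shows "exp (1/2 * (log q (y/q) - 1) * ln (y/q)) = exp (1/2 * (log q y - 1) * ln y) * q / y"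
proof -
  have "1/2 * (log q (y/q) - 1) * ln (y/q) = 1/2 * (log q y - 1) * ln y + (ln q - ln y)"
    using assms by (simp add: log_def ln_div field_simps)
  then show ?thesis using assms by (simp only: exp_add exp_diff) simp
qed

context
  fixes q a1 a2 b2 y :: real
  assumes q: "0 < q" "q < 1" and a: "a1 < 0" "0 < a2" "a2 \<le> b2" and y: "b2 \<le> y"
begin

lemma q_mult_less: "q * a2 < y" "q * b2 < y"
proof -
  have "0 < b2" using a by linarith
  then have "q * a2 < a2" "q * b2 < b2"
    using mult_strict_right_mono[OF q(2) a(2)] mult_strict_right_mono[OF q(2)] by simp_all
  then show "q * a2 < y" "q * b2 < y" using a y by linarith+
qed

lemma rho_factor_pos: "rho_factor q a1 a2 b2 y > 0"
proof -
  note q_mult_less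
  moreover have "a1 / y < 1" using a y by (simp add: divide_neg_pos)
  ultimately show ?thesis using q a y unfolding rho_factor_def
    by (intro mult_pos_pos divide_pos_pos qpoch_inf_pos) auto
qed

lemma rho_factor_div_q:
  "rho_factor q a1 a2 b2 (y/q) = rho_factor q a1 a2 b2 y * (q * (y - a1) / ((y - q*a2) * (y - q*b2)))"
proof -
  have pos: "0 < y" "q * a2 < y" "q * b2 < y" "a1 < y"
    using q_mult_less a y by auto
  have shift: "qpoch_inf (c / (y/q)) q = y * qpoch_inf (c / y) q / (y - c)" if "c < y" for c
  proof -
    have "c / y \<noteq> 1" using that pos(1) by (simp add: divide_eq_1_iff)
    from qpoch_inf_split_head[OF q this] show ?thesis
      using that pos(1) q by (simp add: field_simps)
  qed
  have alg: "G * q / y * (y * A / u) * (y * B / v) / (y * C / w) = G * A * B / C * (q * w / (u * v))"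
    if "u \<noteq> 0" "v \<noteq> 0" "w \<noteq> 0" "C \<noteq> 0" for G A B C u v w
    using that pos(1) by (simp add: field_simps)
  have "qpoch_inf (a1 / y) q > 0" using q a pos by (intro qpoch_inf_pos) (auto simp: divide_neg_pos)
  show ?thesis
    unfolding rho_factor_def exp_half_log_shift[OF q pos(1)] shift[OF pos(2)] shift[OF pos(3)] shift[OF pos(4)]
    by (rule alg) (use pos \<open>qpoch_inf (a1 / y) q > 0\<close> in auto)
qed

end

lemma qEHT_lattice_form:
  fixes q x :: real and y :: "real \<Rightarrow> real"
  assumes "0 < q" "q < 1" "x \<noteq> 0"
  shows "poly \<sigma>1 x * qD (1/q) (qD q y) x + poly \<tau> x * qD q y x =
    q^2 * poly \<sigma>1 x / ((1-q)^2 * x^2) * (y (x/q) - y x)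
    + poly (sigma2 q \<sigma>1 \<tau>) x / ((1-q)^2 * x^2) * (y (q*x) - y x)"
proof -
  have alg: "S * (((Y0 - Ym) / (D*x) - (Yp - Y0) / (D*(x/q))) / ((-D/q)*x)) + T * ((Y0 - Ym) / (D*x))
      = q^2 * S / (D^2*x^2) * (Yp - Y0) + q * (S + (-D/q)*x*T) / (D^2*x^2) * (Ym - Y0)"
    if "D \<noteq> 0" for D S T Y0 Ym Yp :: real
    using that assms by (simp add: field_simps power2_eq_square)
  have qD2: "qD (1/q) (qD q y) x
      = ((y x - y (q*x)) / ((1-q)*x) - (y (x/q) - y x) / ((1-q)*(x/q))) / ((-(1-q)/q) * x)"
    using assms by (simp add: qD_def diff_divide_distrib)
  have qD1: "qD q y x = (y x - y (q*x)) / ((1-q)*x)" using assms by (simp add: qD_def)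
  have \<sigma>2: "poly (sigma2 q \<sigma>1 \<tau>) x = q * (poly \<sigma>1 x + (-(1-q)/q) * x * poly \<tau> x)"
    using assms by (simp add: sigma2_def diff_divide_distrib)
  show ?thesis
    unfolding qD2 qD1 \<sigma>2 by (rule alg) (use assms in simp)
qed

lemma discrete_green_identity:
  fixes c f g :: "nat \<Rightarrow> real"
  defines "L \<equiv> \<lambda>h j. c j * (h (Suc j) - h j) + (if j = 0 then 0 else c (j-1) * (h (j-1) - h j))"
  shows "(\<Sum>j<N. g j * L f j - f j * L g j) =
         (if N = 0 then 0 else c (N-1) * (g (N-1) * f N - f (N-1) * g N))"
proof (induction N)
  case (Suc N)
  then show ?case by (cases N) (simp_all add: L_def algebra_simps)
qed simp

lemma abs_poly_le:
  fixes p :: "real poly"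
  shows "\<bar>poly p y\<bar> \<le> (\<Sum>i\<le>degree p. \<bar>coeff p i\<bar>) * (1 + \<bar>y\<bar>) ^ degree p"
proof -
  have "\<bar>poly p y\<bar> \<le> (\<Sum>i\<le>degree p. \<bar>coeff p i * y ^ i\<bar>)"
    unfolding poly_altdef by (rule sum_abs)
  also have "\<dots> \<le> (\<Sum>i\<le>degree p. \<bar>coeff p i\<bar> * (1 + \<bar>y\<bar>) ^ degree p)"
  proof (rule sum_mono)
    fix i assume "i \<in> {..degree p}"
    then have "\<bar>y\<bar> ^ i \<le> (1 + \<bar>y\<bar>) ^ i" "(1 + \<bar>y\<bar>) ^ i \<le> (1 + \<bar>y\<bar>) ^ degree p"
      by (auto intro!: power_mono power_increasing)
    then show "\<bar>coeff p i * y ^ i\<bar> \<le> \<bar>coeff p i\<bar> * (1 + \<bar>y\<bar>) ^ degree p"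
      by (simp add: abs_mult power_abs mult_left_mono)
  qed
  finally show ?thesis by (simp add: sum_distrib_right)
qed

locale q_lattice_weight =
  fixes q s1 a1 a2 b2 c :: real and \<sigma>1 \<sigma>2 :: "real poly"
  assumes q: "0 < q" "q < 1" and zeros: "a1 < 0" "0 < a2" "a2 \<le> b2" and c_pos: "0 < c"
    and poly_\<sigma>1: "\<And>y. poly \<sigma>1 y = s1 * (y - a1)"
    and poly_\<sigma>2: "\<And>y. poly \<sigma>2 y = c * q^2 * s1 * (y - a2) * (y - b2)"
begin

definition node :: "nat \<Rightarrow> real" where
  "node j = (1/q)^j * b2"

text \<open>The mass of the Jackson integral at \<open>node j\<close> times \<open>\<rho>(node j)\<close>, divided by \<open>b2\<^sup>\<alpha>\<close>:
  the factor \<open>(1/c)^j\<close> is \<open>|node j|\<^sup>\<alpha> / b2\<^sup>\<alpha>\<close> when \<open>q\<^sup>\<alpha> = c\<close>.\<close>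
definition weight :: "nat \<Rightarrow> real" where
  "weight j = (1/q - 1) * b2 * (1/q)^j * (1/c)^j * rho_factor q a1 a2 b2 (node j)"

definition weight_ratio :: "real \<Rightarrow> real" where
  "weight_ratio y = (y - a1) / (c * ((y - q*a2) * (y - q*b2)))"

lemma b2_pos: "0 < b2"
  using zeros by linarith

lemma node_ge: "b2 \<le> node j"
  unfolding node_def using q b2_pos by (simp add: one_le_power)

lemma node_pos: "0 < node j"
  using node_ge b2_pos by (rule less_le_trans[rotated])

lemma node_Suc: "node (Suc j) = node j / q"
  by (simp add: node_def)

lemma q_mult_less_node: "q * a2 < node j" "q * b2 < node j"
  using q_mult_less[OF q zeros node_ge] by auto

lemma weight_pos: "0 < weight j"
  unfolding weight_def using rho_factor_pos[OF q zeros node_ge] q b2_pos c_pos by simp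

lemma weight_Suc: "weight (Suc j) = weight j * weight_ratio (node j)"
proof -
  have alg: "K * (1/q)^Suc j * (1/c)^Suc j * (R * (q * w / D)) = K * (1/q)^j * (1/c)^j * R * (w / (c * D))"
    if "D \<noteq> 0" for K R w D :: real
    using that q c_pos by (simp add: field_simps)
  have "(node j - q*a2) * (node j - q*b2) \<noteq> 0" using q_mult_less_node[of j] by simp
  then show ?thesis
    unfolding weight_def weight_ratio_def node_Suc rho_factor_div_q[OF q zeros node_ge] by (rule alg)
qed

lemma weight_pearson: "weight (Suc j) * poly \<sigma>2 (node (Suc j)) = weight j * poly \<sigma>1 (node j)"
proof -
  have alg: "W * (w / (c * D)) * (c * s1 * D) = W * (s1 * w)" if "D \<noteq> 0" for W w D :: real
    using that c_pos by simp
  have \<sigma>2_eq: "poly \<sigma>2 (node j / q) = c * s1 * ((node j - q*a2) * (node j - q*b2))"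
    unfolding poly_\<sigma>2 using q by (simp add: field_simps power2_eq_square)
  have "(node j - q*a2) * (node j - q*b2) \<noteq> 0" using q_mult_less_node[of j] by simp
  then show ?thesis
    unfolding weight_Suc node_Suc \<sigma>2_eq poly_\<sigma>1 weight_ratio_def by (rule alg)
qed

lemma weight_ratio_nonneg: "0 \<le> weight_ratio (node j)"
  unfolding weight_ratio_def using q_mult_less_node[of j] node_pos[of j] zeros c_pos
  by (intro divide_nonneg_pos) auto

lemma filterlim_node: "filterlim node at_top sequentially"
proof -
  have "filterlim (\<lambda>j. (1/q)^j) at_top sequentially"
    using q by (intro filterlim_at_infinity_imp_filterlim_at_top filterlim_realpow_sequentially_gt1) auto
  then show ?thesis
    unfolding node_def by (rule filterlim_at_top_mult_tendsto_pos[OF tendsto_const b2_pos])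
qed

lemma weight_ratio_node_tendsto_0: "(\<lambda>j. weight_ratio (node j)) \<longlonglongrightarrow> 0"
proof -
  have "(weight_ratio \<longlongrightarrow> 0) at_top"
    unfolding weight_ratio_def using c_pos by real_asymp
  then show ?thesis by (rule filterlim_compose[OF _ filterlim_node])
qed

lemma summable_weight_power: "summable (\<lambda>j. weight j * (1 + node j) ^ K)"
proof -
  have "(\<lambda>j. weight_ratio (node j) * (1/q)^K) \<longlonglongrightarrow> 0"
    using tendsto_mult_left_zero[OF weight_ratio_node_tendsto_0] by simp
  then have "eventually (\<lambda>j. weight_ratio (node j) * (1/q)^K < 1/2) sequentially"
    by (rule order_tendstoD) simp
  then obtain N where N: "\<And>j. N \<le> j \<Longrightarrow> weight_ratio (node j) * (1/q)^K < 1/2"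
    unfolding eventually_sequentially by blast
  show ?thesis
  proof (rule summable_ratio_test[of "1/2" N])
    fix j assume "N \<le> j"
    have "1 + node j / q \<le> (1 + node j) / q" using q by (simp add: field_simps)
    then have "(1 + node j / q)^K \<le> (1/q)^K * (1 + node j)^K"
      using q node_pos[of j] by (simp add: power_mono power_divide field_simps)
    then have "weight (Suc j) * (1 + node (Suc j))^K
        \<le> (weight j * weight_ratio (node j)) * ((1/q)^K * (1 + node j)^K)"
      unfolding weight_Suc node_Suc using weight_pos[of j] weight_ratio_nonneg[of j]
      by (intro mult_left_mono) auto
    also have "\<dots> = (weight_ratio (node j) * (1/q)^K) * (weight j * (1 + node j)^K)"
      by (simp add: mult_ac)
    also have "\<dots> \<le> 1/2 * (weight j * (1 + node j)^K)"
      using N[OF \<open>N \<le> j\<close>] weight_pos[of j] node_pos[of j] by (intro mult_right_mono) auto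
    finally show "norm (weight (Suc j) * (1 + node (Suc j))^K) \<le> 1/2 * norm (weight j * (1 + node j)^K)"
      using weight_pos[of j] weight_pos[of "Suc j"] node_pos[of j] node_pos[of "Suc j"]
      by (simp add: abs_mult)
  qed simp
qed

lemma summable_weight_poly: "summable (\<lambda>j. weight j * poly p (node j))"
proof (rule summable_comparison_test'[OF summable_mult[OF summable_weight_power]])
  fix j
  show "norm (weight j * poly p (node j))
      \<le> (\<Sum>i\<le>degree p. \<bar>coeff p i\<bar>) * (weight j * (1 + node j) ^ degree p)"
    using abs_poly_le[of p "node j"] weight_pos[of j] node_pos[of j]
    by (simp add: abs_mult mult_left_mono mult_ac)
qed

definition lattice_eigen :: "real poly \<Rightarrow> real \<Rightarrow> bool" where
  "lattice_eigen R l \<longleftrightarrow> (\<forall>y. y \<noteq> 0 \<longrightarrow>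
     q^2 * poly \<sigma>1 y / ((1-q)^2 * y^2) * (poly R (y/q) - poly R y)
     + poly \<sigma>2 y / ((1-q)^2 * y^2) * (poly R (q*y) - poly R y) + l * poly R y = 0)"

definition bond :: "nat \<Rightarrow> real" where
  "bond j = weight j * (q^2 * poly \<sigma>1 (node j) / ((1-q)^2 * (node j)^2))"

text \<open>Multiplied by \<open>weight j\<close>, the eigenvalue equation at \<open>node j\<close> becomes a symmetric
  second-order recurrence: the coefficient of the backward difference at \<open>node (Suc i)\<close> equals
  the one of the forward difference at \<open>node i\<close> by the Pearson relation, and at \<open>node 0 = b2\<close>
  there is no backward term because \<open>\<sigma>2(b2) = 0\<close>.\<close>
lemma lattice_eigen_recurrence:
  assumes "lattice_eigen R l"
  shows "bond j * (poly R (node (Suc j)) - poly R (node j))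
     + (if j = 0 then 0 else bond (j-1) * (poly R (node (j-1)) - poly R (node j)))
     = - l * weight j * poly R (node j)"
proof (cases j)
  case 0
  have "poly \<sigma>2 b2 = 0" by (simp add: poly_\<sigma>2)
  with assms have "weight 0 * (q^2 * poly \<sigma>1 b2 / ((1-q)^2 * b2^2) * (poly R (b2/q) - poly R b2)
      + l * poly R b2) = 0"
    using b2_pos unfolding lattice_eigen_def by (auto dest: spec[of _ b2])
  then show ?thesis using 0 unfolding bond_def by (simp add: node_def algebra_simps)
next
  case (Suc i)
  let ?y = "node (Suc i)"
  have y: "?y \<noteq> 0" "q * ?y = node i" "?y / q = node (Suc (Suc i))"
    using node_pos[of "Suc i"] node_pos[of i] q by (simp_all add: node_Suc)
  have "weight (Suc i) * (poly \<sigma>2 ?y / ((1-q)^2 * ?y^2))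
      = weight i * poly \<sigma>1 (node i) / ((1-q)^2 * ?y^2)"
    by (simp add: weight_pearson)
  also have "\<dots> = bond i"
  proof -
    have "V * S / (E * ?y^2) = V * (q^2 * S / (E * (q * ?y)^2))" if "E \<noteq> 0" for V S E :: real
      using that q y(1) by (simp add: field_simps power2_eq_square)
    then show ?thesis unfolding bond_def y(2)[symmetric] using q by simp
  qed
  finally have backward: "weight (Suc i) * (poly \<sigma>2 ?y / ((1-q)^2 * ?y^2)) = bond i" .
  from assms y(1) have "weight (Suc i) * (q^2 * poly \<sigma>1 ?y / ((1-q)^2 * ?y^2) * (poly R (?y/q) - poly R ?y)
      + poly \<sigma>2 ?y / ((1-q)^2 * ?y^2) * (poly R (q*?y) - poly R ?y) + l * poly R ?y) = 0"
    unfolding lattice_eigen_def by simp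
  then have "bond (Suc i) * (poly R (?y/q) - poly R ?y)
      + (weight (Suc i) * (poly \<sigma>2 ?y / ((1-q)^2 * ?y^2))) * (poly R (q*?y) - poly R ?y)
      + l * weight (Suc i) * poly R ?y = 0"
    unfolding bond_def by (simp add: algebra_simps)
  then show ?thesis unfolding backward y(2,3) using Suc by (simp add: algebra_simps)
qed

lemma sums_weight_orthogonal:
  assumes "lattice_eigen P lP" "lattice_eigen Q lQ" "lP \<noteq> lQ"
  shows "(\<lambda>j. weight j * (poly P (node j) * poly Q (node j))) sums 0"
proof -
  define f where "f j = poly P (node j)" for j
  define g where "g j = poly Q (node j)" for j
  define W where "W N = (if N = 0 then 0 else bond (N-1) * (g (N-1) * f N - f (N-1) * g N))" for N
  have partial_sums: "(\<Sum>j<N. weight j * (f j * g j)) = W N / (lQ - lP)" for N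
  proof -
    have "(lQ - lP) * (\<Sum>j<N. weight j * (f j * g j))
        = (\<Sum>j<N. g j * (- lP * weight j * f j) - f j * (- lQ * weight j * g j))"
      by (simp add: sum_distrib_left algebra_simps)
    also have "\<dots> = W N"
      unfolding lattice_eigen_recurrence[OF assms(1), folded f_def, symmetric]
        lattice_eigen_recurrence[OF assms(2), folded g_def, symmetric] W_def
      by (rule discrete_green_identity)
    finally show ?thesis using assms(3) by (simp add: field_simps)
  qed
  define R where "R = \<sigma>1 * (Q * pcompose P [:0, 1/q:] - P * pcompose Q [:0, 1/q:])"
  have W_Suc: "W (Suc N) = q^2 / (1-q)^2 * (1 / (node N)^2) * (weight N * poly R (node N))" for N
    using node_pos[of N] q by (simp add: W_def bond_def R_def f_def g_def poly_pcompose node_Suc field_simps)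
  have "(\<lambda>N. 1 / (node N)^2) \<longlonglongrightarrow> 0"
    by (rule filterlim_compose[OF _ filterlim_node]) real_asymp
  then have "(\<lambda>N. W (Suc N)) \<longlonglongrightarrow> 0"
    unfolding W_Suc
    by (rule tendsto_mult_zero[OF tendsto_mult_right_zero summable_LIMSEQ_zero[OF summable_weight_poly]])
  then have "(\<lambda>N. W N / (lQ - lP)) \<longlonglongrightarrow> 0"
    using tendsto_divide_zero LIMSEQ_imp_Suc by blast
  then have "(\<lambda>N. \<Sum>j<N. weight j * (f j * g j)) \<longlonglongrightarrow> 0"
    by (simp only: partial_sums)
  then show ?thesis unfolding sums_def f_def g_def .
qed

lemma strict_mono_node: "strict_mono node"
  by (rule strict_monoI_Suc) (use node_pos q in \<open>simp add: node_Suc less_divide_eq\<close>)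

lemma exists_node_poly_nonzero:
  assumes "P \<noteq> 0"
  obtains j where "poly P (node j) \<noteq> 0"
proof -
  have "infinite (range node)"
    using strict_mono_imp_inj_on[OF strict_mono_node] finite_imageD infinite_UNIV_nat by blast
  with poly_roots_finite[OF assms] show ?thesis
    using that by (metis (mono_tags, lifting) finite_subset image_subset_iff mem_Collect_eq)
qed

lemma weighted_square_sum_pos:
  assumes "P \<noteq> 0"
  shows "0 < (\<Sum>j. weight j * (poly P (node j))^2)"
proof -
  obtain i where "poly P (node i) \<noteq> 0" using exists_node_poly_nonzero[OF assms] .
  show ?thesis
  proof (rule suminf_pos2[of _ i])
    show "summable (\<lambda>j. weight j * (poly P (node j))^2)"
      using summable_weight_poly[of "P^2"] by (simp add: poly_power)
    show "0 \<le> weight j * (poly P (node j))^2" for j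
      using weight_pos[of j] by simp
    show "0 < weight i * (poly P (node i))^2"
      using \<open>poly P (node i) \<noteq> 0\<close> weight_pos[of i] by simp
  qed
qed

lemma jackson_term_eq_weight:
  assumes "exp (\<alpha> * of_real (ln q)) = of_real c"
  shows "of_real ((1/q - 1) * b2 * (1/q)^j) * rho q \<alpha> a1 a2 b2 (node j)
    = exp (\<alpha> * of_real (ln b2)) * of_real (weight j)"
proof -
  have "\<alpha> * of_real (ln \<bar>node j\<bar>) = \<alpha> * of_real (ln b2) - of_nat j * (\<alpha> * of_real (ln q))"
    using b2_pos q by (simp add: node_def ln_mult ln_realpow ln_div algebra_simps)
  then have exp_node: "exp (\<alpha> * of_real (ln \<bar>node j\<bar>)) = exp (\<alpha> * of_real (ln b2)) / of_real c ^ j"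
    by (simp add: exp_diff exp_of_nat_mult assms)
  show ?thesis
    unfolding rho_eq_rho_factor exp_node weight_def using c_pos
    by (simp add: of_real_mult of_real_power of_real_divide power_divide field_simps)
qed

lemma sums_weight_eigenfamily:
  assumes "\<And>n. lattice_eigen (P n) (l n)" "inj l"
  shows "(\<lambda>j. weight j * (poly (P n) (node j) * poly (P m) (node j))) sums
    (if m = n then (\<Sum>j. weight j * (poly (P n) (node j))^2) else 0)"
proof (cases "m = n")
  case True
  then show ?thesis using summable_weight_poly[of "P n * P n"] by (simp add: summable_sums power2_eq_square)
next
  case False
  then have "l n \<noteq> l m" using \<open>inj l\<close> by (auto dest: injD)
  with False show ?thesis using sums_weight_orthogonal[OF assms(1,1)] by simp
qed

lemma has_qint_inf_rho:
  assumes "exp (\<alpha> * of_real (ln q)) = of_real c" "(\<lambda>j. weight j * F (node j)) sums s"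
  shows "has_qint_inf q (\<lambda>x. of_real (F x) * rho q \<alpha> a1 a2 b2 x) b2 (exp (\<alpha> * of_real (ln b2)) * of_real s)"
proof -
  have summand: "of_real ((1/q - 1) * b2 * (1/q)^j) * (of_real (F (node j)) * rho q \<alpha> a1 a2 b2 (node j))
      = exp (\<alpha> * of_real (ln b2)) * of_real (weight j * F (node j))" for j
    by (simp only: mult.left_commute[of "of_real _"] jackson_term_eq_weight[OF assms(1)]) (simp add: mult_ac)
  show ?thesis
    unfolding has_qint_inf_def node_def[symmetric] summand by (rule sums_mult[OF sums_of_real[OF assms(2)]])
qed

lemma lattice_eigen_if_qEHT_solution:
  assumes "\<sigma>2 = sigma2 q \<sigma>1 \<tau>" "qEHT_solution q \<sigma>1 \<tau> l (poly R)"
  shows "lattice_eigen R l"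
  unfolding lattice_eigen_def
proof (intro allI impI)
  fix y :: real assume "y \<noteq> 0"
  from qEHT_lattice_form[OF q this, of \<sigma>1 "poly R" \<tau>] assms show
    "q^2 * poly \<sigma>1 y / ((1-q)^2 * y^2) * (poly R (y/q) - poly R y)
     + poly \<sigma>2 y / ((1-q)^2 * y^2) * (poly R (q*y) - poly R y) + l * poly R y = 0"
    unfolding qEHT_solution_def by (metis (no_types, lifting))
qed

end

lemma sigma2_linear_half_second_deriv:
  fixes q :: real
  assumes "q \<noteq> 0"
  shows "poly (pderiv (pderiv (sigma2 q [:c0, c1:] [:t0, t1:]))) 0 / 2 = (q - 1) * t1"
  using assms by (simp add: sigma2_def pderiv_pCons field_simps)

lemma qEHT_lambda_linear: "qEHT_lambda q [:c0, c1:] [:t0, t1:] n = - t1 * qnum q (int n)"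
  by (simp add: qEHT_lambda_def pderiv_pCons)

lemma inj_qEHT_lambda_linear:
  fixes q :: real
  assumes "0 < q" "q < 1" "t1 \<noteq> 0"
  shows "inj (qEHT_lambda q [:c0, c1:] [:t0, t1:])"
  using qnum_nat_eq_iff[OF assms(1,2)] assms(3) by (intro injI) (simp add: qEHT_lambda_linear)

lemma qEHT_linear_polynomial_solutions:
  fixes q :: real
  assumes "0 < q" "q < 1" "t1 \<noteq> 0"
  obtains P where "\<And>n. degree (P n) = n" "\<And>n. P n \<noteq> 0"
    "\<And>n. qEHT_solution q [:c0, c1:] [:t0, t1:] (qEHT_lambda q [:c0, c1:] [:t0, t1:] n) (poly (P n))"
proof -
  have "\<forall>n. \<exists>P. degree P = n \<and> P \<noteq> 0
      \<and> qEHT_solution q [:c0, c1:] [:t0, t1:] (qEHT_lambda q [:c0, c1:] [:t0, t1:] n) (poly P)"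
    using qEHT_op_linear_eigenpoly[OF assms]
    unfolding qEHT_solution_poly_iff[OF assms(1,2)] qEHT_lambda_linear by blast
  then show ?thesis using that by metis
qed

lemma q_lattice_weight_linear_sigma1:
  fixes q s1 a1 t0 t1 a2 b2 :: real
  defines "\<sigma>2 \<equiv> sigma2 q [:- s1 * a1, s1:] [:t0, t1:]"
  assumes "0 < q" "q < 1" "s1 \<noteq> 0"
    and "\<sigma>2 = smult (poly (pderiv (pderiv \<sigma>2)) 0 / 2) ([:- a2, 1:] * [:- b2, 1:])"
    and "a1 < 0" "0 < a2" "a2 \<le> b2" "t1 / s1 < 0"
  shows "q_lattice_weight q s1 a1 a2 b2 ((q - 1) * (t1 / s1) / q^2) [:- s1 * a1, s1:] \<sigma>2"
proof
  have half_\<sigma>2'': "poly (pderiv (pderiv \<sigma>2)) 0 / 2 = (q - 1) * t1"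
    unfolding \<sigma>2_def using assms(2) by (intro sigma2_linear_half_second_deriv) simp
  have c: "(q - 1) * (t1 / s1) / q^2 * q^2 * s1 = (q - 1) * t1" using assms(2,4) by simp
  have "poly \<sigma>2 y = (q - 1) * t1 * ((y - a2) * (y - b2))" for y
    by (subst assms(5)) (simp add: half_\<sigma>2'' algebra_simps)
  then show "poly \<sigma>2 y = (q - 1) * (t1 / s1) / q^2 * q^2 * s1 * (y - a2) * (y - b2)" for y
    by (metis c mult.assoc)
  show "0 < (q - 1) * (t1 / s1) / q^2"
    using assms(2,3,9) by (intro divide_pos_pos mult_neg_neg) auto
qed (use assms in \<open>simp_all add: algebra_simps\<close>)

theorem theorem5p4:
  fixes q s1 a1 t0 t1 a2 b2 :: real and \<alpha> :: complex and \<sigma>1 \<tau> :: "real poly"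
  assumes "0 < q" "q < 1"
    and "\<sigma>1 = [:- s1 * a1, s1:]" and "s1 \<noteq> 0" and "a1 \<noteq> 0"
    and "\<tau> = [:t0, t1:]" and "t1 \<noteq> 0"
    and "sigma2 q \<sigma>1 \<tau> = smult (poly (pderiv (pderiv (sigma2 q \<sigma>1 \<tau>))) 0 / 2) ([:- a2, 1:] * [:- b2, 1:])"
    and "a1 < 0" and "0 < a2" and "a2 \<le> b2"
    and "t1 / s1 < 0"
    and "exp (\<alpha> * of_real (ln q)) =
           of_real (q powi (-2) * (poly (pderiv (pderiv (sigma2 q \<sigma>1 \<tau>))) 0 / 2) / s1)"
  shows "\<exists>(P :: nat \<Rightarrow> real poly) (d :: nat \<Rightarrow> complex).
           (\<forall>n. degree (P n) = n \<and> qEHT_solution q \<sigma>1 \<tau> (qEHT_lambda q \<sigma>1 \<tau> n) (poly (P n)))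
         \<and> (\<forall>n. d n \<noteq> 0)
         \<and> (\<forall>m n. has_qint_inf q (\<lambda>x. of_real (poly (P n) x * poly (P m) x) * rho q \<alpha> a1 a2 b2 x) b2
                    (if m = n then d n else 0))"
proof -
  obtain P where P: "\<And>n. degree (P n) = n" "\<And>n. P n \<noteq> 0"
    "\<And>n. qEHT_solution q \<sigma>1 \<tau> (qEHT_lambda q \<sigma>1 \<tau> n) (poly (P n))"
    using qEHT_linear_polynomial_solutions[OF assms(1,2,7)] unfolding assms(3,6) by metis
  define c where "c = (q - 1) * (t1 / s1) / q^2"
  interpret q_lattice_weight q s1 a1 a2 b2 c \<sigma>1 "sigma2 q \<sigma>1 \<tau>"
    unfolding c_def assms(3,6) using assms(1,2,4,8-12)
    by (intro q_lattice_weight_linear_sigma1) (simp_all add: assms(3,6))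
  have "q powi (-2) * (poly (pderiv (pderiv (sigma2 q \<sigma>1 \<tau>))) 0 / 2) / s1 = c"
    using assms(1) unfolding assms(3,6) c_def
    by (simp add: sigma2_linear_half_second_deriv power_int_minus power_int_of_nat field_simps)
  then have c: "exp (\<alpha> * of_real (ln q)) = of_real c" using assms(13) by simp
  define d where "d n = exp (\<alpha> * of_real (ln b2)) * of_real (\<Sum>j. weight j * (poly (P n) (node j))^2)" for n
  have inj: "inj (qEHT_lambda q \<sigma>1 \<tau>)"
    unfolding assms(3,6) by (rule inj_qEHT_lambda_linear[OF assms(1,2,7)])
  have "has_qint_inf q (\<lambda>x. of_real (poly (P n) x * poly (P m) x) * rho q \<alpha> a1 a2 b2 x) b2
      (if m = n then d n else 0)" for m n
    using has_qint_inf_rho[OF c sums_weight_eigenfamily[where P = P and m = m and n = n,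
          OF lattice_eigen_if_qEHT_solution[OF refl P(3)] inj]]
    by (cases "m = n") (simp_all add: d_def)
  moreover have "d n \<noteq> 0" for n
    using weighted_square_sum_pos[OF P(2), of n] by (simp add: d_def)
  ultimately show ?thesis using P(1,3) by (intro exI[of _ P] exI[of _ d]) simp
qed

end
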